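(* Let $(X_1,\dots,X_d)$ be a non-degenerate $d$-dimensional $1$-Meixner random vector with $E[X_k]=0$ and $E[X_iX_j]=\delta_{i,j}$ for all $i,j,k$, and let $\alpha_{i,j,k}$ be the real numbers with $[U_i,X_j]=\sum_{k}\alpha_{i,j,k}X_k+\beta_{i,j}I$. Then for all $i,j,k\in\{1,\dots,d\}$, $E[X_iX_jX_k]=2\alpha_{i,j,k}$.
   Context: Let $X_1,\dots,X_d$ be real random variables on $(\Omega,\mathcal F,P)$ with finite moments of all orders. $F$ is the space of polynomial random variables $f(X_1,\dots,X_d)$ (complex coefficients), $F_n$ those of degree $\le n$, $G_0=F_0$, $G_n=F_n\ominus F_{n-1}$ in $L^2(P)$. For $f\in G_n$, $X_if\in G_{n-1}\oplus G_n\oplus G_{n+1}$; its components define $a^-(i)f,a^0(i)f,a^+(i)f$ respectively, extended linearly to $F$. $U_i:=a^-(i)+\tfrac12a^0(i)$. $(X_1,\dots,X_d)$ is a $d$-dimensional $1$-Meixner random vector if there are reals $\alpha_{i,j,k},\beta_{i,j}$ with $[U_i,X_j]=\sum_k\alpha_{i,j,k}X_k+\beta_{i,j}I$ on $F$ for all $i,j$ (with $X_j$ the multiplication operator, $I$ the identity); it is non-degenerate if $I,X_1,\dots,X_d$ are linearly independent operators on $F$. *)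

theory Defs
  imports "HOL-Probability.Probability"
begin

text \<open>Random variables X i indexed by a finite type 'i (d = CARD('i)), on a
probability space M. Polynomial random variables are complex-valued functions
on the sample space; L2 equalities are read almost everywhere.\<close>

definition monoRV :: "('i::finite \<Rightarrow> 'a \<Rightarrow> real) \<Rightarrow> ('i \<Rightarrow> nat) \<Rightarrow> 'a \<Rightarrow> complex" where
  "monoRV X m \<omega> = (\<Prod>i\<in>UNIV. complex_of_real (X i \<omega>) ^ m i)"

definition polyF :: "('i::finite \<Rightarrow> 'a \<Rightarrow> real) \<Rightarrow> nat \<Rightarrow> ('a \<Rightarrow> complex) set" where
  "polyF X n = {f. \<exists>S c. finite S \<and> (\<forall>m\<in>S. sum m UNIV \<le> n) \<and>
                       f = (\<lambda>\<omega>. \<Sum>m\<in>S. c m * monoRV X m \<omega>)}"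

definition polyAll :: "('i::finite \<Rightarrow> 'a \<Rightarrow> real) \<Rightarrow> ('a \<Rightarrow> complex) set" where
  "polyAll X = (\<Union>n. polyF X n)"

definition ipL2 :: "'a measure \<Rightarrow> ('a \<Rightarrow> complex) \<Rightarrow> ('a \<Rightarrow> complex) \<Rightarrow> complex" where
  "ipL2 M f g = integral\<^sup>L M (\<lambda>\<omega>. f \<omega> * cnj (g \<omega>))"

definition polyG :: "'a measure \<Rightarrow> ('i::finite \<Rightarrow> 'a \<Rightarrow> real) \<Rightarrow> nat \<Rightarrow> ('a \<Rightarrow> complex) set" where
  "polyG M X n = (if n = 0 then polyF X 0
                  else {f \<in> polyF X n. \<forall>g\<in>polyF X (n - 1). ipL2 M f g = 0})"

definition projG :: "'a measure \<Rightarrow> ('i::finite \<Rightarrow> 'a \<Rightarrow> real) \<Rightarrow> nat \<Rightarrow> ('a \<Rightarrow> complex) \<Rightarrow> 'a \<Rightarrow> complex" where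
  "projG M X n f = (SOME g. g \<in> polyG M X n \<and>
                      (\<forall>h\<in>polyG M X n. ipL2 M (\<lambda>\<omega>. f \<omega> - g \<omega>) h = 0))"

definition pdeg :: "('i::finite \<Rightarrow> 'a \<Rightarrow> real) \<Rightarrow> ('a \<Rightarrow> complex) \<Rightarrow> nat" where
  "pdeg X f = (LEAST n. f \<in> polyF X n)"

definition mulX :: "('i::finite \<Rightarrow> 'a \<Rightarrow> real) \<Rightarrow> 'i \<Rightarrow> ('a \<Rightarrow> complex) \<Rightarrow> 'a \<Rightarrow> complex" where
  "mulX X i f = (\<lambda>\<omega>. complex_of_real (X i \<omega>) * f \<omega>)"

text \<open>a^-(i) and a^0(i), extended linearly to F via the decomposition
f = sum_n P_n f with P_n f in G_n: a^-(i) f = sum_n P_(n-1)(X_i P_n f),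
a^0(i) f = sum_n P_n (X_i P_n f).\<close>
definition aMinus :: "'a measure \<Rightarrow> ('i::finite \<Rightarrow> 'a \<Rightarrow> real) \<Rightarrow> 'i \<Rightarrow> ('a \<Rightarrow> complex) \<Rightarrow> 'a \<Rightarrow> complex" where
  "aMinus M X i f = (\<lambda>\<omega>. \<Sum>n\<in>{1..pdeg X f}.
       projG M X (n - 1) (mulX X i (projG M X n f)) \<omega>)"

definition aZero :: "'a measure \<Rightarrow> ('i::finite \<Rightarrow> 'a \<Rightarrow> real) \<Rightarrow> 'i \<Rightarrow> ('a \<Rightarrow> complex) \<Rightarrow> 'a \<Rightarrow> complex" where
  "aZero M X i f = (\<lambda>\<omega>. \<Sum>n\<le>pdeg X f. projG M X n (mulX X i (projG M X n f)) \<omega>)"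

definition opU :: "'a measure \<Rightarrow> ('i::finite \<Rightarrow> 'a \<Rightarrow> real) \<Rightarrow> 'i \<Rightarrow> ('a \<Rightarrow> complex) \<Rightarrow> 'a \<Rightarrow> complex" where
  "opU M X i f = (\<lambda>\<omega>. aMinus M X i f \<omega> + aZero M X i f \<omega> / 2)"

definition finite_moments :: "'a measure \<Rightarrow> ('i \<Rightarrow> 'a \<Rightarrow> real) \<Rightarrow> bool" where
  "finite_moments M X \<longleftrightarrow> (\<forall>i. X i \<in> borel_measurable M \<and>
                            (\<forall>n::nat. integrable M (\<lambda>\<omega>. \<bar>X i \<omega>\<bar> ^ n)))"

definition meixner_rel :: "'a measure \<Rightarrow> ('i::finite \<Rightarrow> 'a \<Rightarrow> real) \<Rightarrow>
    ('i \<Rightarrow> 'i \<Rightarrow> 'i \<Rightarrow> real) \<Rightarrow> ('i \<Rightarrow> 'i \<Rightarrow> real) \<Rightarrow> bool" where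
  "meixner_rel M X \<alpha> \<beta> \<longleftrightarrow> (\<forall>i j. \<forall>f\<in>polyAll X. AE \<omega> in M.
      opU M X i (mulX X j f) \<omega> - mulX X j (opU M X i f) \<omega> =
      (\<Sum>k\<in>UNIV. complex_of_real (\<alpha> i j k) * mulX X k f \<omega>) + complex_of_real (\<beta> i j) * f \<omega>)"

definition nondegenerate :: "'a measure \<Rightarrow> ('i::finite \<Rightarrow> 'a \<Rightarrow> real) \<Rightarrow> bool" where
  "nondegenerate M X \<longleftrightarrow> (\<forall>(c0::complex) (c::'i \<Rightarrow> complex).
      (\<forall>f\<in>polyAll X. AE \<omega> in M. c0 * f \<omega> + (\<Sum>k\<in>UNIV. c k * mulX X k f \<omega>) = 0)
      \<longrightarrow> c0 = 0 \<and> (\<forall>k. c k = 0))"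

end

theory Submission
  imports Defs
begin

(*
  Apply the Meixner relation to the constant polynomial 1.  Since 1 spans G_0 and E[X_i] = 0,
  U_i 1 = 0.  Centering makes G_1 the span of X_1, ..., X_d, in which they form an
  orthonormal basis; so X_j lies in G_1, and the components of X_i X_j in G_0 and G_1 are
  delta_ij and sum_k E[X_i X_j X_k] X_k.  Hence
    [U_i, X_j] 1 = U_i X_j = delta_ij + 1/2 sum_k E[X_i X_j X_k] X_k,
  and equating this almost surely with sum_k alpha_ijk X_k + beta_ij, then pairing with X_l,
  gives E[X_i X_j X_l] = 2 alpha_ijl.
*)

definition lin_comb :: "('i::finite \<Rightarrow> 'a \<Rightarrow> real) \<Rightarrow> ('i \<Rightarrow> complex) \<Rightarrow> 'a \<Rightarrow> complex" where
  "lin_comb X d \<omega> = (\<Sum>k\<in>UNIV. d k * complex_of_real (X k \<omega>))"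

lemma lin_comb_unit: "lin_comb X (\<lambda>k. if k = j then 1 else 0) = (\<lambda>\<omega>. complex_of_real (X j \<omega>))"
  by (simp add: lin_comb_def fun_eq_iff if_distrib[of "\<lambda>x. x * _"] cong: if_cong)

lemma lin_comb_diff: "lin_comb X a \<omega> - lin_comb X b \<omega> = lin_comb X (\<lambda>k. a k - b k) \<omega>"
  by (simp add: lin_comb_def left_diff_distrib sum_subtractf)

lemma monoRV_zero: "monoRV X (\<lambda>_. 0) = (\<lambda>_. 1)"
  by (simp add: monoRV_def fun_eq_iff)

lemma monoRV_indicator: "monoRV X (indicator {k}) = (\<lambda>\<omega>. complex_of_real (X k \<omega>))"
proof
  fix \<omega>
  have "monoRV X (indicator {k}) \<omega> = (\<Prod>i\<in>UNIV. if i = k then complex_of_real (X i \<omega>) else 1)"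
    unfolding monoRV_def by (rule prod.cong) auto
  then show "monoRV X (indicator {k}) \<omega> = complex_of_real (X k \<omega>)" by simp
qed

lemma indicator_singleton_ne_0: "indicator {k} \<noteq> (\<lambda>_. 0 :: 'b::zero_neq_one)"
  by (auto simp: fun_eq_iff intro!: exI[of _ k])

lemma indicator_singleton_eq_iff:
  "indicator {k} = (indicator {j} :: 'a \<Rightarrow> 'b::zero_neq_one) \<longleftrightarrow> k = j"
  by (auto simp: fun_eq_iff split: split_indicator)

lemma multiindex_sum_le_1_cases:
  fixes m :: "'i::finite \<Rightarrow> nat"
  assumes "sum m UNIV \<le> 1"
  shows "m = (\<lambda>_. 0) \<or> (\<exists>k. m = indicator {k})"
proof (cases "\<exists>k. m k \<noteq> 0")
  case True
  then obtain k where k: "m k \<noteq> 0" by blast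
  have "sum m UNIV = m k + sum m (UNIV - {k})"
    by (simp add: sum.remove)
  then have "m k = 1" and "sum m (UNIV - {k}) = 0"
    using assms k by linarith+
  then have "m = indicator {k}"
    by (auto simp: fun_eq_iff indicator_def)
  then show ?thesis by blast
qed auto

lemma monoRV_sum_le_1:
  assumes "sum m UNIV \<le> 1"
  shows "monoRV X m \<omega> = of_bool (m = (\<lambda>_. 0)) + lin_comb X (\<lambda>k. of_bool (m = indicator {k})) \<omega>"
  using multiindex_sum_le_1_cases[OF assms]
  by (auto simp: monoRV_zero monoRV_indicator lin_comb_unit indicator_singleton_ne_0
      indicator_singleton_ne_0[symmetric] indicator_singleton_eq_iff lin_comb_def)

lemma polyF_0_eq:
  fixes X :: "'i::finite \<Rightarrow> 'a \<Rightarrow> real"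
  shows "polyF X 0 = range (\<lambda>c. \<lambda>_. c)"
proof (intro equalityI subsetI)
  fix f assume "f \<in> polyF X 0"
  then obtain S c where S: "\<forall>m\<in>S. m = (\<lambda>_. 0)" and f: "f = (\<lambda>\<omega>. \<Sum>m\<in>S. c m * monoRV X m \<omega>)"
    unfolding polyF_def by (auto simp: fun_eq_iff)
  have "monoRV X m = (\<lambda>_. 1)" if "m \<in> S" for m
  proof -
    from S that have "m = (\<lambda>_. 0)" by blast
    then show ?thesis by (simp add: monoRV_zero)
  qed
  then have "f = (\<lambda>_. \<Sum>m\<in>S. c m)"
    by (simp add: f cong: sum.cong)
  then show "f \<in> range (\<lambda>c. \<lambda>_. c)" by blast
next
  fix f :: "'a \<Rightarrow> complex" assume "f \<in> range (\<lambda>c. \<lambda>_. c)"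
  then obtain c where "f = (\<lambda>_. c)" by blast
  then show "f \<in> polyF X 0"
    unfolding polyF_def by (intro CollectI exI[of _ "{\<lambda>_. 0}"] exI[of _ "\<lambda>_. c"]) (simp add: monoRV_zero)
qed

lemma pdeg_const: "pdeg X (\<lambda>_. c) = 0"
  unfolding pdeg_def by (rule Least_eq_0) (auto simp: polyF_0_eq)

lemma polyF_1_eq:
  fixes X :: "'i::finite \<Rightarrow> 'a \<Rightarrow> real"
  shows "polyF X 1 = {\<lambda>\<omega>. c + lin_comb X d \<omega> | c d. True}"
proof (intro equalityI subsetI)
  fix f assume "f \<in> polyF X 1"
  then obtain S c where S: "finite S" "\<forall>m\<in>S. sum m UNIV \<le> 1"
    and f: "f = (\<lambda>\<omega>. \<Sum>m\<in>S. c m * monoRV X m \<omega>)"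
    unfolding polyF_def by auto
  have "f \<omega> = (\<Sum>m\<in>S. c m * of_bool (m = (\<lambda>_. 0)))
      + lin_comb X (\<lambda>k. \<Sum>m\<in>S. c m * of_bool (m = indicator {k})) \<omega>" for \<omega>
  proof -
    have "f \<omega> = (\<Sum>m\<in>S. c m * of_bool (m = (\<lambda>_. 0)))
        + (\<Sum>m\<in>S. \<Sum>k\<in>UNIV. c m * of_bool (m = indicator {k}) * complex_of_real (X k \<omega>))"
      using S(2) by (simp only: f monoRV_sum_le_1 lin_comb_def distrib_left sum.distrib
          sum_distrib_left mult.assoc cong: sum.cong)
    then show ?thesis
      by (simp only: lin_comb_def sum.swap[of _ S] sum_distrib_right)
  qed
  then show "f \<in> {\<lambda>\<omega>. c + lin_comb X d \<omega> | c d. True}" by blast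
next
  fix f assume "f \<in> {\<lambda>\<omega>. c + lin_comb X d \<omega> | c d. True}"
  then obtain c d where f: "f = (\<lambda>\<omega>. c + lin_comb X d \<omega>)" by blast
  define e :: "'i \<Rightarrow> 'i \<Rightarrow> nat" where "e k = indicator {k}" for k
  define g where "g m = (if m = (\<lambda>_. 0) then c else d (inv e m))" for m
  have inj: "inj e" by (auto simp: inj_def e_def indicator_singleton_eq_iff)
  have e_ne_0: "e k \<noteq> (\<lambda>_. 0)" for k
    by (simp add: e_def indicator_singleton_ne_0)
  then have notin: "(\<lambda>_. 0) \<notin> range e"
    by (metis rangeE)
  have "f = (\<lambda>\<omega>. \<Sum>m\<in>insert (\<lambda>_. 0) (range e). g m * monoRV X m \<omega>)"
  proof
    fix \<omega>
    have "(\<Sum>m\<in>insert (\<lambda>_. 0) (range e). g m * monoRV X m \<omega>)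
        = c + (\<Sum>m\<in>range e. g m * monoRV X m \<omega>)"
      using notin by (simp add: g_def monoRV_zero)
    also have "(\<Sum>m\<in>range e. g m * monoRV X m \<omega>) = (\<Sum>k\<in>UNIV. g (e k) * monoRV X (e k) \<omega>)"
      using inj by (simp add: sum.reindex)
    also have "\<dots> = lin_comb X d \<omega>"
    proof -
      have "g (e k) = d k" for k
        using e_ne_0 by (simp add: g_def inv_f_f[OF inj])
      moreover have "monoRV X (e k) = (\<lambda>\<omega>. complex_of_real (X k \<omega>))" for k
        by (simp add: e_def monoRV_indicator)
      ultimately show ?thesis by (simp add: lin_comb_def)
    qed
    finally show "f \<omega> = (\<Sum>m\<in>insert (\<lambda>_. 0) (range e). g m * monoRV X m \<omega>)"
      by (simp add: f)
  qed
  moreover have "sum (e k) UNIV = 1" for k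
    unfolding e_def by (subst sum_indicator_eq_card) simp_all
  ultimately show "f \<in> polyF X 1"
    unfolding polyF_def
    by (intro CollectI exI[of _ "insert (\<lambda>_. 0) (range e)"] exI[of _ g] conjI) auto
qed

lemma abs_prod_le_sum_power:
  fixes f :: "'b \<Rightarrow> 'c::linordered_idom"
  assumes "finite I" "I \<noteq> {}"
  shows "\<bar>\<Prod>i\<in>I. f i\<bar> \<le> (\<Sum>i\<in>I. \<bar>f i\<bar> ^ card I)"
proof -
  have "Max ((\<lambda>i. \<bar>f i\<bar>) ` I) \<in> (\<lambda>i. \<bar>f i\<bar>) ` I"
    using assms by (intro Max_in) auto
  then obtain j where "j \<in> I" and "\<bar>f j\<bar> = Max ((\<lambda>i. \<bar>f i\<bar>) ` I)"
    by auto
  then have j: "j \<in> I" "\<And>i. i \<in> I \<Longrightarrow> \<bar>f i\<bar> \<le> \<bar>f j\<bar>"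
    using assms(1) by auto
  have "\<bar>\<Prod>i\<in>I. f i\<bar> = (\<Prod>i\<in>I. \<bar>f i\<bar>)" by (rule abs_prod)
  also have "\<dots> \<le> (\<Prod>i\<in>I. \<bar>f j\<bar>)" using j by (intro prod_mono) auto
  also have "\<dots> = \<bar>f j\<bar> ^ card I" by simp
  also have "\<dots> \<le> (\<Sum>i\<in>I. \<bar>f i\<bar> ^ card I)"
    using j(1) assms(1) by (intro member_le_sum) auto
  finally show ?thesis .
qed

lemma finite_moments_integrable_prod:
  fixes n :: nat
  assumes "finite_moments M X" "n > 0"
  shows "integrable M (\<lambda>\<omega>. \<Prod>l<n. X (idx l) \<omega>)"
proof (rule Bochner_Integration.integrable_bound)
  have X: "X i \<in> borel_measurable M" "integrable M (\<lambda>\<omega>. \<bar>X i \<omega>\<bar> ^ n)" for i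
    using assms(1) unfolding finite_moments_def by auto
  show "integrable M (\<lambda>\<omega>. \<Sum>l<n. \<bar>X (idx l) \<omega>\<bar> ^ n)"
    using X by auto
  show "(\<lambda>\<omega>. \<Prod>l<n. X (idx l) \<omega>) \<in> borel_measurable M"
    using X by measurable
  show "AE \<omega> in M. norm (\<Prod>l<n. X (idx l) \<omega>) \<le> norm (\<Sum>l<n. \<bar>X (idx l) \<omega>\<bar> ^ n)"
  proof (rule AE_I2)
    fix \<omega>
    have "\<bar>\<Prod>l<n. X (idx l) \<omega>\<bar> \<le> (\<Sum>l<n. \<bar>X (idx l) \<omega>\<bar> ^ n)"
      using abs_prod_le_sum_power[of "{..<n}" "\<lambda>l. X (idx l) \<omega>"] assms(2) by auto
    then show "norm (\<Prod>l<n. X (idx l) \<omega>) \<le> norm (\<Sum>l<n. \<bar>X (idx l) \<omega>\<bar> ^ n)"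
      by (simp add: sum_nonneg)
  qed
qed

lemma ipL2_const_right: "ipL2 M f (\<lambda>_. c) = integral\<^sup>L M f * cnj c"
  unfolding ipL2_def by simp

lemma (in prob_space) projG_0:
  fixes X :: "'i::finite \<Rightarrow> 'a \<Rightarrow> real"
  assumes f: "integrable M f"
  shows "projG M X 0 f = (\<lambda>_. expectation f)"
  unfolding projG_def
proof (rule some_equality)
  have G0: "polyG M X 0 = range (\<lambda>c. \<lambda>_. c)"
    by (simp add: polyG_def polyF_0_eq)
  show "(\<lambda>_. expectation f) \<in> polyG M X 0 \<and>
      (\<forall>h\<in>polyG M X 0. ipL2 M (\<lambda>\<omega>. f \<omega> - expectation f) h = 0)"
    using f by (auto simp: G0 ipL2_const_right prob_space)
  fix g assume g: "g \<in> polyG M X 0 \<and> (\<forall>h\<in>polyG M X 0. ipL2 M (\<lambda>\<omega>. f \<omega> - g \<omega>) h = 0)"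
  then obtain c where c: "g = (\<lambda>_. c)" by (auto simp: G0)
  with g have "ipL2 M (\<lambda>\<omega>. f \<omega> - c) (\<lambda>_. 1) = 0" by (auto simp: G0)
  then show "g = (\<lambda>_. expectation f)"
    using f by (simp add: c ipL2_const_right prob_space)
qed

locale centered_orthonormal = prob_space M for M :: "'a measure" +
  fixes X :: "'i::finite \<Rightarrow> 'a \<Rightarrow> real"
  assumes finite_moments: "finite_moments M X"
    and mean_zero: "\<And>k. expectation (X k) = 0"
    and second_moments: "\<And>i j. expectation (\<lambda>\<omega>. X i \<omega> * X j \<omega>) = (if i = j then 1 else 0)"
begin

lemma integrable_X: "integrable M (X k)"
  using finite_moments_integrable_prod[OF finite_moments, of 1 "\<lambda>_. k"] by simp

lemma integrable_X_mult: "integrable M (\<lambda>\<omega>. X i \<omega> * X j \<omega>)"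
  using finite_moments_integrable_prod[OF finite_moments, of 2 "(!) [i, j]"]
  by (simp add: numeral_2_eq_2 lessThan_Suc mult.commute)

lemma integrable_X_mult3: "integrable M (\<lambda>\<omega>. X i \<omega> * X j \<omega> * X k \<omega>)"
  using finite_moments_integrable_prod[OF finite_moments, of 3 "(!) [i, j, k]"]
  by (simp add: numeral_3_eq_3 lessThan_Suc ac_simps)

lemma integrable_lin_comb_mult: "integrable M (\<lambda>\<omega>. lin_comb X a \<omega> * complex_of_real (X l \<omega>))"
  using integrable_X_mult
  by (simp add: lin_comb_def sum_distrib_right mult.assoc flip: of_real_mult)

lemma integral_lin_comb_mult:
  "(\<integral>\<omega>. lin_comb X a \<omega> * complex_of_real (X l \<omega>) \<partial>M) = a l"
proof -
  have "(\<integral>\<omega>. lin_comb X a \<omega> * complex_of_real (X l \<omega>) \<partial>M)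
      = (\<Sum>k\<in>UNIV. a k * complex_of_real (expectation (\<lambda>\<omega>. X k \<omega> * X l \<omega>)))"
    using integrable_X_mult
    by (simp add: lin_comb_def sum_distrib_right mult.assoc flip: of_real_mult)
  also have "\<dots> = a l"
    by (simp add: second_moments if_distrib cong: if_cong)
  finally show ?thesis .
qed

lemma ipL2_lin_comb_right:
  assumes "\<And>l. integrable M (\<lambda>\<omega>. g \<omega> * complex_of_real (X l \<omega>))"
  shows "ipL2 M g (lin_comb X d) = (\<Sum>l\<in>UNIV. cnj (d l) * (\<integral>\<omega>. g \<omega> * complex_of_real (X l \<omega>) \<partial>M))"
proof -
  have "ipL2 M g (lin_comb X d)
      = (\<integral>\<omega>. (\<Sum>l\<in>UNIV. cnj (d l) * (g \<omega> * complex_of_real (X l \<omega>))) \<partial>M)"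
    by (simp add: ipL2_def lin_comb_def sum_distrib_left ac_simps)
  also have "\<dots> = (\<Sum>l\<in>UNIV. cnj (d l) * (\<integral>\<omega>. g \<omega> * complex_of_real (X l \<omega>) \<partial>M))"
    using assms by (simp add: Bochner_Integration.integral_sum)
  finally show ?thesis .
qed

lemma ipL2_affine_const:
  "ipL2 M (\<lambda>\<omega>. c + lin_comb X d \<omega>) (\<lambda>_. e) = c * cnj e"
  using integrable_X mean_zero
  by (simp add: ipL2_const_right lin_comb_def prob_space)

lemma polyG_1_eq: "polyG M X 1 = range (lin_comb X)"
proof -
  have G1: "polyG M X 1 = {f \<in> polyF X 1. \<forall>e. ipL2 M f (\<lambda>_. e) = 0}"
    by (simp add: polyG_def polyF_0_eq)
  show ?thesis
  proof (intro equalityI subsetI)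
    fix f assume "f \<in> polyG M X 1"
    then obtain c d where f: "f = (\<lambda>\<omega>. c + lin_comb X d \<omega>)" and "\<forall>e. ipL2 M f (\<lambda>_. e) = 0"
      unfolding G1 polyF_1_eq by blast
    then have "c = 0"
      using ipL2_affine_const[of c d 1] by simp
    with f show "f \<in> range (lin_comb X)" by auto
  next
    fix f assume "f \<in> range (lin_comb X)"
    then obtain d where f: "f = (\<lambda>\<omega>. 0 + lin_comb X d \<omega>)" by auto
    then have "f \<in> polyF X 1"
      unfolding polyF_1_eq by blast
    moreover have "\<forall>e. ipL2 M f (\<lambda>_. e) = 0"
      using ipL2_affine_const[of 0 d] f by simp
    ultimately show "f \<in> polyG M X 1"
      unfolding G1 by blast
  qed
qed

lemma projG_1:
  assumes g: "\<And>l. integrable M (\<lambda>\<omega>. g \<omega> * complex_of_real (X l \<omega>))"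
  shows "projG M X 1 g = lin_comb X (\<lambda>k. \<integral>\<omega>. g \<omega> * complex_of_real (X k \<omega>) \<partial>M)"
  unfolding projG_def
proof (rule some_equality)
  have orth_iff: "(\<forall>h\<in>polyG M X 1. ipL2 M (\<lambda>\<omega>. g \<omega> - lin_comb X a \<omega>) h = 0)
      \<longleftrightarrow> a = (\<lambda>k. \<integral>\<omega>. g \<omega> * complex_of_real (X k \<omega>) \<partial>M)" for a
  proof -
    define b where "b k = (\<integral>\<omega>. g \<omega> * complex_of_real (X k \<omega>) \<partial>M)" for k
    have ip: "ipL2 M (\<lambda>\<omega>. g \<omega> - lin_comb X a \<omega>) (lin_comb X d)
        = (\<Sum>l\<in>UNIV. cnj (d l) * (b l - a l))" for d
      using g integrable_lin_comb_mult
      by (simp add: b_def ipL2_lin_comb_right left_diff_distrib integral_lin_comb_mult)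
    have "b k = a k" if "\<forall>h\<in>polyG M X 1. ipL2 M (\<lambda>\<omega>. g \<omega> - lin_comb X a \<omega>) h = 0" for k
    proof -
      have "0 = (\<Sum>l\<in>UNIV. cnj (if l = k then 1 else 0) * (b l - a l))"
        using that ip[of "\<lambda>l. if l = k then 1 else 0"] unfolding polyG_1_eq by auto
      also have "\<dots> = b k - a k"
        by (simp add: if_distrib[of cnj] if_distrib[of "\<lambda>x. x * _"] cong: if_cong)
      finally show ?thesis by simp
    qed
    then show ?thesis
      using ip unfolding polyG_1_eq b_def[symmetric] by auto
  qed
  show "lin_comb X (\<lambda>k. \<integral>\<omega>. g \<omega> * complex_of_real (X k \<omega>) \<partial>M) \<in> polyG M X 1 \<and>
      (\<forall>h\<in>polyG M X 1. ipL2 M (\<lambda>\<omega>. g \<omega> - lin_comb X (\<lambda>k. \<integral>\<omega>. g \<omega> * complex_of_real (X k \<omega>) \<partial>M) \<omega>) h = 0)"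
    using orth_iff unfolding polyG_1_eq by auto
  fix h assume "h \<in> polyG M X 1 \<and> (\<forall>h'\<in>polyG M X 1. ipL2 M (\<lambda>\<omega>. g \<omega> - h \<omega>) h' = 0)"
  then show "h = lin_comb X (\<lambda>k. \<integral>\<omega>. g \<omega> * complex_of_real (X k \<omega>) \<partial>M)"
    using orth_iff unfolding polyG_1_eq by auto
qed

lemma X_notin_polyF_0: "(\<lambda>\<omega>. complex_of_real (X j \<omega>)) \<notin> polyF X 0"
proof
  assume "(\<lambda>\<omega>. complex_of_real (X j \<omega>)) \<in> polyF X 0"
  then obtain c where "(\<lambda>\<omega>. complex_of_real (X j \<omega>)) = (\<lambda>_. c)"
    by (auto simp: polyF_0_eq)
  then have Xj: "X j = (\<lambda>_. Re c)"
    by (metis Re_complex_of_real)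
  then have "Re c = 0"
    using mean_zero[of j] by (simp add: prob_space)
  then show False
    using second_moments[of j j] by (simp add: Xj)
qed

lemma pdeg_X: "pdeg X (\<lambda>\<omega>. complex_of_real (X j \<omega>)) = 1"
  unfolding pdeg_def
proof (rule Least_equality)
  have "(\<lambda>\<omega>. complex_of_real (X j \<omega>)) = (\<lambda>\<omega>. 0 + lin_comb X (\<lambda>k. if k = j then 1 else 0) \<omega>)"
    by (simp add: lin_comb_unit)
  then show "(\<lambda>\<omega>. complex_of_real (X j \<omega>)) \<in> polyF X 1"
    unfolding polyF_1_eq by blast
  show "1 \<le> n" if "(\<lambda>\<omega>. complex_of_real (X j \<omega>)) \<in> polyF X n" for n
    using that X_notin_polyF_0[of j] by (cases n) auto
qed

lemma projG_1_of_real: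
  assumes "\<And>l. integrable M (\<lambda>\<omega>. F \<omega> * X l \<omega>)"
  shows "projG M X 1 (\<lambda>\<omega>. complex_of_real (F \<omega>))
       = lin_comb X (\<lambda>k. complex_of_real (expectation (\<lambda>\<omega>. F \<omega> * X k \<omega>)))"
  using projG_1[of "\<lambda>\<omega>. complex_of_real (F \<omega>)"] assms
  by (simp flip: of_real_mult)

lemma opU_const_1: "opU M X i (\<lambda>_. 1) = (\<lambda>_. 0)"
proof -
  have "projG M X 0 (\<lambda>_. 1) = (\<lambda>_. 1)"
    by (simp add: projG_0 prob_space)
  moreover have "projG M X 0 (\<lambda>\<omega>. complex_of_real (X i \<omega>)) = (\<lambda>_. 0)"
    by (simp add: projG_0 integrable_X mean_zero)
  ultimately show ?thesis
    by (simp add: opU_def aMinus_def aZero_def pdeg_const mulX_def)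
qed

lemma opU_X:
  "opU M X i (\<lambda>\<omega>. complex_of_real (X j \<omega>)) = (\<lambda>\<omega>. of_bool (i = j)
     + lin_comb X (\<lambda>k. complex_of_real (expectation (\<lambda>\<omega>. X i \<omega> * X j \<omega> * X k \<omega>)) / 2) \<omega>)"
proof -
  have "projG M X 1 (\<lambda>\<omega>. complex_of_real (X j \<omega>)) = (\<lambda>\<omega>. complex_of_real (X j \<omega>))"
    using projG_1_of_real[OF integrable_X_mult, of j]
    by (simp add: second_moments if_distrib[of complex_of_real] eq_commute[of j] lin_comb_unit
        cong: if_cong)
  moreover have "projG M X 0 (\<lambda>\<omega>. complex_of_real (X j \<omega>)) = (\<lambda>_. 0)"
    by (simp add: projG_0 integrable_X mean_zero)
  moreover have "projG M X 0 (\<lambda>_. 0) = (\<lambda>_. 0)"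
    by (simp add: projG_0)
  moreover have "projG M X 0 (\<lambda>\<omega>. complex_of_real (X i \<omega> * X j \<omega>)) = (\<lambda>_. of_bool (i = j))"
    by (simp add: projG_0 integrable_X_mult second_moments del: of_real_mult)
  moreover have "projG M X 1 (\<lambda>\<omega>. complex_of_real (X i \<omega> * X j \<omega>))
      = lin_comb X (\<lambda>k. complex_of_real (expectation (\<lambda>\<omega>. X i \<omega> * X j \<omega> * X k \<omega>)))"
    by (rule projG_1_of_real[OF integrable_X_mult3])
  ultimately show ?thesis
    by (simp add: opU_def aMinus_def aZero_def pdeg_X mulX_def atMost_Suc lin_comb_def
        sum_divide_distrib flip: of_real_mult)
qed

lemma commutator_opU_mulX_at_1:
  "opU M X i (mulX X j (\<lambda>_. 1)) \<omega> - mulX X j (opU M X i (\<lambda>_. 1)) \<omega> = of_bool (i = j)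
     + lin_comb X (\<lambda>k. complex_of_real (expectation (\<lambda>\<omega>. X i \<omega> * X j \<omega> * X k \<omega>)) / 2) \<omega>"
  by (simp add: mulX_def opU_X opU_const_1)

lemma meixner_rel_at_1:
  assumes "meixner_rel M X \<alpha> \<beta>"
  shows "AE \<omega> in M. (of_bool (i = j) - complex_of_real (\<beta> i j)) + lin_comb X (\<lambda>k.
      complex_of_real (expectation (\<lambda>\<omega>. X i \<omega> * X j \<omega> * X k \<omega>)) / 2 - complex_of_real (\<alpha> i j k)) \<omega> = 0"
proof -
  let ?m = "\<lambda>k. complex_of_real (expectation (\<lambda>\<omega>. X i \<omega> * X j \<omega> * X k \<omega>)) / 2"
  let ?a = "\<lambda>k. complex_of_real (\<alpha> i j k)"
  have "(\<lambda>_. 1) \<in> polyAll X"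
    unfolding polyAll_def by (auto simp: polyF_0_eq intro!: exI[of _ 0])
  then have "AE \<omega> in M. opU M X i (mulX X j (\<lambda>_. 1)) \<omega> - mulX X j (opU M X i (\<lambda>_. 1)) \<omega>
      = (\<Sum>k\<in>UNIV. complex_of_real (\<alpha> i j k) * mulX X k (\<lambda>_. 1) \<omega>) + complex_of_real (\<beta> i j) * 1"
    using assms unfolding meixner_rel_def by blast
  then have "AE \<omega> in M. of_bool (i = j) + lin_comb X ?m \<omega> = lin_comb X ?a \<omega> + complex_of_real (\<beta> i j)"
    by (simp only: commutator_opU_mulX_at_1) (simp add: lin_comb_def mulX_def)
  then show ?thesis
    by (rule eventually_mono) (simp add: algebra_simps flip: lin_comb_diff)
qed

(* Orthonormality alone makes I, X_1, ..., X_d linearly independent, which is why the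
   theorem never needs its non-degeneracy hypothesis. *)
lemma AE_affine_eq_0_imp_coeff_eq_0:
  assumes "AE \<omega> in M. c + lin_comb X a \<omega> = 0"
  shows "a l = 0"
proof -
  have "(\<integral>\<omega>. (c + lin_comb X a \<omega>) * complex_of_real (X l \<omega>) \<partial>M) = 0"
    using assms by (auto intro!: integral_eq_zero_AE elim: eventually_mono)
  moreover have "(\<integral>\<omega>. (c + lin_comb X a \<omega>) * complex_of_real (X l \<omega>) \<partial>M) = a l"
    using integrable_X integrable_lin_comb_mult
    by (simp add: distrib_right integral_lin_comb_mult mean_zero)
  ultimately show ?thesis by simp
qed

end

theorem mainTheorem3:
  fixes M :: "'a measure" and X :: "'i::finite \<Rightarrow> 'a \<Rightarrow> real"
    and \<alpha> :: "'i \<Rightarrow> 'i \<Rightarrow> 'i \<Rightarrow> real" and \<beta> :: "'i \<Rightarrow> 'i \<Rightarrow> real"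
  assumes "prob_space M"
    and "finite_moments M X"
    and "meixner_rel M X \<alpha> \<beta>"
    and "nondegenerate M X"
    and "\<And>k. integral\<^sup>L M (X k) = 0"
    and "\<And>i j. integral\<^sup>L M (\<lambda>\<omega>. X i \<omega> * X j \<omega>) = (if i = j then 1 else 0)"
  shows "\<forall>i j k. integral\<^sup>L M (\<lambda>\<omega>. X i \<omega> * X j \<omega> * X k \<omega>) = 2 * \<alpha> i j k"
proof (intro allI)
  interpret centered_orthonormal M X
    using assms by (simp add: centered_orthonormal_def centered_orthonormal_axioms_def)
  fix i j l
  have "complex_of_real (expectation (\<lambda>\<omega>. X i \<omega> * X j \<omega> * X l \<omega>)) / 2
      - complex_of_real (\<alpha> i j l) = 0"
    using AE_affine_eq_0_imp_coeff_eq_0[OF meixner_rel_at_1[OF assms(3), of i j], of l] by simp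
  then have "complex_of_real (expectation (\<lambda>\<omega>. X i \<omega> * X j \<omega> * X l \<omega>))
      = complex_of_real (2 * \<alpha> i j l)"
    by simp
  then show "expectation (\<lambda>\<omega>. X i \<omega> * X j \<omega> * X l \<omega>) = 2 * \<alpha> i j l"
    by (simp only: of_real_eq_iff)
qed

end
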